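(* Let $\boldsymbol{\mu}=(\mu_s)_{s\ge1}$ be a fixed probability distribution on $\{1,2,\dots\}$ with $\mu_1>0$ and $\sum_{s=1}^\infty s\mu_s<\infty$, for each $n$ let $\Pi_n\sim ESC_{[n]}(\boldsymbol{\mu})$, and let $M_n$ be the size of the largest cluster of $\Pi_n$. Then $M_n/n\xrightarrow{p}0$ as $n\to\infty$.
   Context: For a fixed distribution $\boldsymbol{\mu}$ on the positive integers with $\mu_1>0$, $ESC_{[n]}(\boldsymbol{\mu})$ is the law of the following random partition of $[n]=\{1,\dots,n\}$: let $S_1,S_2,\dots$ be i.i.d. with law $\boldsymbol{\mu}$, condition on the event $E_n$ that $\sum_{j=1}^k S_j=n$ for some $k\in\mathbb{N}$, let $K$ be that unique $k$, and let $(z_1,\dots,z_n)$ be a uniformly random permutation of the vector with $S_1$ copies of $1$, ..., $S_K$ copies of $K$; the partition has blocks $\{i:z_i=j\}$, $j=1,\dots,K$ (so it has $K$ clusters of sizes $S_1,\dots,S_K$). $\xrightarrow{p}$ denotes convergence in probability. *)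

theory Defs
  imports "HOL-Probability.Probability" "HOL-Combinatorics.Permutations"
begin

text \<open>The i.i.d. sizes S_1,...,S_n with law mu (0-indexed: S j for j < n).
  Only the first n sizes can matter for the event E_n, since every S_j is at least 1.\<close>
definition iid_sizes :: "nat pmf \<Rightarrow> nat \<Rightarrow> (nat \<Rightarrow> nat) pmf" where
  "iid_sizes \<mu> n = Pi_pmf {..<n} 0 (\<lambda>_. \<mu>)"

definition hits :: "nat \<Rightarrow> (nat \<Rightarrow> nat) \<Rightarrow> bool" where
  "hits n S \<longleftrightarrow> (\<exists>k\<le>n. (\<Sum>j<k. S j) = n)"

definition nclust :: "nat \<Rightarrow> (nat \<Rightarrow> nat) \<Rightarrow> nat" where
  "nclust n S = (THE k. k \<le> n \<and> (\<Sum>j<k. S j) = n)"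

text \<open>The vector with S_1 copies of 1, ..., S_K copies of K, as a function of the
  0-based position i: the label j with S_1+...+S_(j-1) <= i < S_1+...+S_j.\<close>
definition lab :: "(nat \<Rightarrow> nat) \<Rightarrow> nat \<Rightarrow> nat" where
  "lab S i = (LEAST j. i < (\<Sum>l<j. S l))"

text \<open>The partition of [n] given the sizes and a permutation sigma of the positions:
  z_i = lab S (sigma (i-1)) for i in {1..n}, blocks {i. z_i = j} for j = 1..K.\<close>
definition blocks :: "nat \<Rightarrow> (nat \<Rightarrow> nat) \<Rightarrow> (nat \<Rightarrow> nat) \<Rightarrow> nat set set" where
  "blocks n S \<sigma> = (\<lambda>j. {i \<in> {1..n}. lab S (\<sigma> (i - 1)) = j}) ` {1..nclust n S}"

definition ESC :: "nat \<Rightarrow> nat pmf \<Rightarrow> nat set set pmf" where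
  "ESC n \<mu> =
     do { S \<leftarrow> cond_pmf (iid_sizes \<mu> n) {S. hits n S};
          \<sigma> \<leftarrow> pmf_of_set {\<sigma>. \<sigma> permutes {..<n}};
          return_pmf (blocks n S \<sigma>) }"

definition largest :: "nat set set \<Rightarrow> nat" where
  "largest P = Max (card ` P)"

end

theory Submission
  imports Defs
begin

text \<open>Write u(n) for the probability that n is a partial sum of the i.i.d. sizes and
  T(j) = P(S > j). The renewal identity \<Sum>k\<le>n. u(k) T(n - k) = 1, together with
  \<Sum>j. T(j) = E S < \<infinity>, forces u(n - j) \<ge> 1/(2R) for some j below a fixed R; since
  u(m + j) \<ge> \<mu>(1)^j u(m), the u(n) are bounded below by some c > 0. Every cluster of
  ESC_[n](\<mu>) has the size of one of the S_j, hence
  P(M_n > \<epsilon>n) \<le> P(\<exists>j<n. S_j > \<epsilon>n) / u(n) \<le> n P(S > \<epsilon>n) / c \<le> E[S; S > \<epsilon>n] / (\<epsilon>c),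
  which tends to 0 because S has finite mean.\<close>

lemma measure_pmf_prob_bind_pmf:
  "measure_pmf.prob (bind_pmf M f) X = measure_pmf.expectation M (\<lambda>x. measure_pmf.prob (f x) X)"
proof -
  have "(\<lambda>x. measure_pmf (f x)) \<in> measure_pmf M \<rightarrow>\<^sub>M subprob_algebra (count_space UNIV)"
    by (subst measurable_cong_sets[of _ "count_space UNIV" _ "subprob_algebra (count_space UNIV)"])
       (auto simp: measurable_count_space_eq1 space_subprob_algebra intro: measure_pmf.subprob_space_axioms)
  then show ?thesis
    unfolding measure_pmf_bind by (rule measure_pmf.measure_bind) auto
qed

lemma measure_pmf_prob_cong:
  assumes "\<And>x. x \<in> set_pmf p \<Longrightarrow> x \<in> A \<longleftrightarrow> x \<in> B"
  shows "measure_pmf.prob p A = measure_pmf.prob p B"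
  using assms by (intro measure_prob_cong_0) (auto simp: set_pmf_eq)

lemma measure_cond_pmf:
  assumes "measure_pmf.prob p A > 0"
  shows "measure_pmf.prob (cond_pmf p A) B = measure_pmf.prob p (A \<inter> B) / measure_pmf.prob p A"
proof -
  have nonempty: "set_pmf p \<inter> A \<noteq> {}"
    using assms measure_Int_set_pmf[of p A] by (auto simp: Int_commute)
  have "emeasure (measure_pmf p) A \<noteq> 0"
    using assms by (simp add: measure_pmf.emeasure_eq_measure)
  then show ?thesis
    unfolding cond_pmf.rep_eq[OF nonempty] by (intro measure_uniform_measure) (auto simp: measure_pmf.emeasure_finite)
qed

lemma iid_sizes_pos:
  assumes "pmf \<mu> 0 = 0" "S \<in> set_pmf (iid_sizes \<mu> n)" "j < n"
  shows "1 \<le> S j"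
proof -
  have "S j \<in> set_pmf \<mu>"
    using assms(2,3) set_Pi_pmf[of "{..<n}" 0 "\<lambda>_. \<mu>"] unfolding iid_sizes_def PiE_dflt_def by auto
  then show ?thesis
    using assms(1) by (metis less_one not_le set_pmf_iff)
qed

lemma map_component_iid_sizes:
  assumes "j < n"
  shows "map_pmf (\<lambda>S. S j) (iid_sizes \<mu> n) = \<mu>"
  unfolding iid_sizes_def using assms by (subst Pi_pmf_component) auto

lemma map_restrict_iid_sizes:
  assumes "m \<le> n"
  shows "map_pmf (\<lambda>S j. if j < m then S j else 0) (iid_sizes \<mu> n) = iid_sizes \<mu> m"
  using Pi_pmf_subset[of "{..<n}" "{..<m}" 0 "\<lambda>_. \<mu>"] assms unfolding iid_sizes_def by simp

lemma iid_sizes_Suc: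
  "iid_sizes \<mu> (Suc n) = map_pmf (\<lambda>(s, S). case_nat s S) (pair_pmf \<mu> (iid_sizes \<mu> n))"
proof -
  define h where "h i = (if i = 0 then n else i - 1)" for i :: nat
  have "Pi_pmf (Suc ` {..<n}) (0::nat) (\<lambda>_. \<mu>) = map_pmf (\<lambda>S. S \<circ> h) (iid_sizes \<mu> n)"
    unfolding iid_sizes_def
  proof (rule Pi_pmf_bij_betw)
    show "bij_betw h (Suc ` {..<n}) {..<n}"
      by (rule bij_betw_byWitness[where f'=Suc]) (auto simp: h_def)
    show "h x \<notin> {..<n}" if "x \<notin> Suc ` {..<n}" for x
      using that by (cases x) (auto simp: h_def)
  qed auto
  then have "iid_sizes \<mu> (Suc n) =
      map_pmf (\<lambda>(s, S). S(0 := s)) (pair_pmf \<mu> (map_pmf (\<lambda>S. S \<circ> h) (iid_sizes \<mu> n)))"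
    unfolding iid_sizes_def lessThan_Suc_eq_insert_0 by (subst Pi_pmf_insert) auto
  also have "\<dots> = map_pmf (\<lambda>(s, S). case_nat s S) (pair_pmf \<mu> (iid_sizes \<mu> n))"
    unfolding pair_map_pmf2 pmf.map_comp
    by (intro map_pmf_cong refl) (auto simp: fun_eq_iff h_def split: nat.split)
  finally show ?thesis .
qed

section \<open>Renewal probabilities\<close>

definition renewal_prob :: "nat pmf \<Rightarrow> nat \<Rightarrow> real" where
  "renewal_prob \<mu> n = measure_pmf.prob (iid_sizes \<mu> n) {S. hits n S}"

lemma renewal_prob_nonneg: "0 \<le> renewal_prob \<mu> n"
  and renewal_prob_le_1: "renewal_prob \<mu> n \<le> 1"
  unfolding renewal_prob_def by simp_all

lemma renewal_prob_0: "renewal_prob \<mu> 0 = 1"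
  unfolding renewal_prob_def hits_def by simp

lemma hits_restrict: "hits m (\<lambda>j. if j < m then S j else 0) \<longleftrightarrow> hits m S"
  unfolding hits_def by (intro ex_cong1 conj_cong refl arg_cong[where f="\<lambda>x. x = m"] sum.cong) auto

lemma prob_hits_iid_sizes:
  assumes "m \<le> n"
  shows "measure_pmf.prob (iid_sizes \<mu> n) {S. hits m S} = renewal_prob \<mu> m"
  unfolding renewal_prob_def map_restrict_iid_sizes[OF assms, symmetric] by (simp add: hits_restrict)

lemma le_sum_lessThan:
  assumes "k \<le> n" "\<And>j. j < n \<Longrightarrow> (1::nat) \<le> S j"
  shows "k \<le> (\<Sum>j<k. S j)"
  using sum_mono[of "{..<k}" "\<lambda>_. 1::nat" S] assms by simp

lemma hits_case_nat:
  assumes "\<And>j. j < n \<Longrightarrow> 1 \<le> S j" "1 \<le> s"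
  shows "hits (Suc n) (case_nat s S) \<longleftrightarrow> s \<le> Suc n \<and> hits (Suc n - s) S"
proof
  assume "hits (Suc n) (case_nat s S)"
  then obtain k where k: "k \<le> Suc n" "(\<Sum>j<k. case_nat s S j) = Suc n"
    unfolding hits_def by auto
  then obtain k' where "k = Suc k'"
    by (cases k) auto
  with k have "s + (\<Sum>j<k'. S j) = Suc n" and "k' \<le> n"
    by (simp_all add: sum.lessThan_Suc_shift del: sum.lessThan_Suc)
  with le_sum_lessThan[of k' n S] assms(1) show "s \<le> Suc n \<and> hits (Suc n - s) S"
    unfolding hits_def by (intro conjI exI[of _ k']) auto
next
  assume "s \<le> Suc n \<and> hits (Suc n - s) S"
  then obtain k where "s \<le> Suc n" "k \<le> Suc n - s" "(\<Sum>j<k. S j) = Suc n - s"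
    unfolding hits_def by auto
  with assms(2) show "hits (Suc n) (case_nat s S)"
    unfolding hits_def by (intro exI[of _ "Suc k"]) (simp add: sum.lessThan_Suc_shift del: sum.lessThan_Suc)
qed

lemma renewal_prob_Suc:
  assumes "pmf \<mu> 0 = 0"
  shows "renewal_prob \<mu> (Suc n) = (\<Sum>s\<in>{1..Suc n}. pmf \<mu> s * renewal_prob \<mu> (Suc n - s))"
proof -
  define Q where "Q = iid_sizes \<mu> n"
  define g where "g s = measure_pmf.prob Q {S. hits (Suc n) (case_nat s S)}" for s
  have g: "g s = (if s \<le> Suc n then renewal_prob \<mu> (Suc n - s) else 0)" if "1 \<le> s" for s
  proof -
    have "g s = measure_pmf.prob Q {S. s \<le> Suc n \<and> hits (Suc n - s) S}"
      unfolding g_def using hits_case_nat iid_sizes_pos[OF assms] that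
      by (intro measure_pmf_prob_cong) (auto simp: Q_def)
    then show ?thesis
      unfolding Q_def using that by (auto simp: prob_hits_iid_sizes)
  qed
  have "renewal_prob \<mu> (Suc n) = measure_pmf.prob (bind_pmf \<mu> (\<lambda>s. map_pmf (case_nat s) Q)) {S. hits (Suc n) S}"
    unfolding renewal_prob_def iid_sizes_Suc Q_def pair_pmf_def map_bind_pmf
    by (simp add: map_pmf_def[symmetric] pmf.map_comp o_def)
  also have "\<dots> = measure_pmf.expectation \<mu> g"
    unfolding measure_pmf_prob_bind_pmf g_def by (simp add: vimage_def)
  also have "\<dots> = (\<Sum>s\<in>{1..Suc n}. g s * pmf \<mu> s)"
  proof (rule integral_measure_pmf_real)
    fix s assume "s \<in> set_pmf \<mu>" "g s \<noteq> 0"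
    then show "s \<in> {1..Suc n}"
      using assms g by (cases "s = 0") (auto simp: set_pmf_iff split: if_splits)
  qed simp
  also have "\<dots> = (\<Sum>s\<in>{1..Suc n}. pmf \<mu> s * renewal_prob \<mu> (Suc n - s))"
    by (intro sum.cong) (auto simp: g)
  finally show ?thesis .
qed

lemma renewal_prob_Suc_ge:
  assumes "pmf \<mu> 0 = 0"
  shows "pmf \<mu> 1 * renewal_prob \<mu> m \<le> renewal_prob \<mu> (Suc m)"
  unfolding renewal_prob_Suc[OF assms]
  using member_le_sum[of 1 "{1..Suc m}" "\<lambda>s. pmf \<mu> s * renewal_prob \<mu> (Suc m - s)"]
  by (simp add: renewal_prob_nonneg)

lemma renewal_prob_add_ge:
  assumes "pmf \<mu> 0 = 0"
  shows "pmf \<mu> 1 ^ j * renewal_prob \<mu> m \<le> renewal_prob \<mu> (m + j)"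
proof (induction j)
  case (Suc j)
  have "pmf \<mu> 1 ^ Suc j * renewal_prob \<mu> m \<le> pmf \<mu> 1 * renewal_prob \<mu> (m + j)"
    using mult_left_mono[OF Suc.IH pmf_nonneg] by (simp add: mult.assoc)
  also have "\<dots> \<le> renewal_prob \<mu> (m + Suc j)"
    using renewal_prob_Suc_ge[OF assms] by simp
  finally show ?case .
qed simp

section \<open>Tails of the size distribution\<close>

definition tail_prob :: "nat pmf \<Rightarrow> nat \<Rightarrow> real" where
  "tail_prob \<mu> j = measure_pmf.prob \<mu> {s. j < s}"

text \<open>tail_mean \<mu> r is E[S; S \<ge> r]; the series is junk unless \<mu> has finite mean.\<close>
definition tail_mean :: "nat pmf \<Rightarrow> nat \<Rightarrow> real" where
  "tail_mean \<mu> r = (\<Sum>i. real (i + r) * pmf \<mu> (i + r))"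

lemma tail_prob_nonneg: "0 \<le> tail_prob \<mu> j"
  and tail_prob_le_1: "tail_prob \<mu> j \<le> 1"
  unfolding tail_prob_def by simp_all

lemma tail_prob_0:
  assumes "pmf \<mu> 0 = 0"
  shows "tail_prob \<mu> 0 = 1"
proof -
  have "{s. 0 < s} = UNIV - {0::nat}"
    by auto
  then show ?thesis
    using assms by (simp add: tail_prob_def measure_pmf.finite_measure_Diff measure_pmf_single)
qed

lemma tail_prob_eq_Suc: "tail_prob \<mu> j = tail_prob \<mu> (Suc j) + pmf \<mu> (Suc j)"
proof -
  have "{s. j < s} = {s. Suc j < s} \<union> {Suc j}"
    by auto
  then have "tail_prob \<mu> j = measure_pmf.prob \<mu> ({s. Suc j < s} \<union> {Suc j})"
    by (simp add: tail_prob_def)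
  then show ?thesis
    unfolding tail_prob_def by (subst (asm) measure_pmf.finite_measure_Union) (auto simp: measure_pmf_single)
qed

lemma sums_pmf_nat: "pmf (\<mu> :: nat pmf) sums 1"
proof -
  have "(\<lambda>i. measure_pmf.prob \<mu> {..i}) \<longlonglongrightarrow> measure_pmf.prob \<mu> (\<Union>i. {..i})"
    by (rule measure_pmf.finite_Lim_measure_incseq) (auto simp: incseq_def)
  moreover have "(\<Union>i. {..i::nat}) = UNIV"
    by auto
  ultimately have "(\<lambda>i. sum (pmf \<mu>) {..<Suc i}) \<longlonglongrightarrow> 1"
    by (simp add: measure_measure_pmf_finite lessThan_Suc_atMost)
  then show ?thesis
    unfolding sums_def by (rule filterlim_sequentially_Suc[THEN iffD1])
qed

lemma tail_prob_eq_suminf: "tail_prob \<mu> j = (\<Sum>i. pmf \<mu> (i + Suc j))"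
proof -
  have "{s. j < s} = UNIV - {..<Suc j}"
    by auto
  then have "tail_prob \<mu> j = 1 - sum (pmf \<mu>) {..<Suc j}"
    by (simp add: tail_prob_def measure_pmf.finite_measure_Diff measure_measure_pmf_finite)
  then show ?thesis
    using suminf_minus_initial_segment[of "pmf \<mu>" "Suc j"] sums_pmf_nat by (simp add: sums_iff)
qed

lemma tail_mean_eq:
  assumes "summable (\<lambda>s. real s * pmf \<mu> s)"
  shows "tail_mean \<mu> r = (\<Sum>s. real s * pmf \<mu> s) - (\<Sum>s<r. real s * pmf \<mu> s)"
  unfolding tail_mean_def using suminf_minus_initial_segment[OF assms] by simp

lemma tail_mean_tendsto_0:
  assumes "summable (\<lambda>s. real s * pmf \<mu> s)"
  shows "tail_mean \<mu> \<longlonglongrightarrow> 0"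
proof -
  have "(\<lambda>r. (\<Sum>s. real s * pmf \<mu> s) - (\<Sum>s<r. real s * pmf \<mu> s)) \<longlonglongrightarrow>
      (\<Sum>s. real s * pmf \<mu> s) - (\<Sum>s. real s * pmf \<mu> s)"
    by (intro tendsto_diff tendsto_const summable_LIMSEQ assms)
  then show ?thesis
    unfolding tail_mean_eq[OF assms, abs_def] by simp
qed

lemma Suc_mult_tail_prob_le_tail_mean:
  assumes "summable (\<lambda>s. real s * pmf \<mu> s)"
  shows "real (Suc m) * tail_prob \<mu> m \<le> tail_mean \<mu> (Suc m)"
proof -
  have "summable (\<lambda>i. pmf \<mu> (i + Suc m))"
    using sums_pmf_nat summable_ignore_initial_segment sums_summable by blast
  moreover have "summable (\<lambda>i. real (i + Suc m) * pmf \<mu> (i + Suc m))"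
    using assms summable_ignore_initial_segment by blast
  ultimately have "(\<Sum>i. real (Suc m) * pmf \<mu> (i + Suc m)) \<le> tail_mean \<mu> (Suc m)"
    unfolding tail_mean_def by (intro suminf_le summable_mult mult_right_mono) auto
  then show ?thesis
    using suminf_mult[of "\<lambda>i. pmf \<mu> (i + Suc m)"] \<open>summable (\<lambda>i. pmf \<mu> (i + Suc m))\<close>
    by (simp add: tail_prob_eq_suminf)
qed

lemma mult_prob_greater_le_tail_mean:
  assumes "summable (\<lambda>s. real s * pmf \<mu> s)" "0 \<le> x"
  shows "x * measure_pmf.prob \<mu> {s. x < real s} \<le> tail_mean \<mu> (Suc (nat \<lfloor>x\<rfloor>))"
proof -
  define m where "m = nat \<lfloor>x\<rfloor>"
  have "{s. x < real s} = {s. m < s}"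
    unfolding m_def using assms(2) by (auto simp: floor_less_iff nat_less_iff)
  then have "x * measure_pmf.prob \<mu> {s. x < real s} = x * tail_prob \<mu> m"
    by (simp add: tail_prob_def)
  also have "\<dots> \<le> real (Suc m) * tail_prob \<mu> m"
    unfolding m_def using assms(2) by (intro mult_right_mono tail_prob_nonneg) linarith
  also have "\<dots> \<le> tail_mean \<mu> (Suc m)"
    by (rule Suc_mult_tail_prob_le_tail_mean[OF assms(1)])
  finally show ?thesis
    unfolding m_def .
qed

lemma sum_tail_prob_lessThan:
  "(\<Sum>j<N. tail_prob \<mu> j) = (\<Sum>s<Suc N. real s * pmf \<mu> s) + real N * tail_prob \<mu> N"
proof (induction N)
  case (Suc N)
  then show ?case
    using tail_prob_eq_Suc[of \<mu> N] by (simp add: algebra_simps)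
qed simp

lemma sum_tail_prob_le_tail_mean:
  assumes "summable (\<lambda>s. real s * pmf \<mu> s)" "R \<le> N"
  shows "(\<Sum>j\<in>{R..<N}. tail_prob \<mu> j) \<le> tail_mean \<mu> (Suc R)"
proof -
  have "(\<Sum>j\<in>{R..<N}. tail_prob \<mu> j) = (\<Sum>j<N. tail_prob \<mu> j) - (\<Sum>j<R. tail_prob \<mu> j)"
    using sum.atLeastLessThan_concat[of 0 R N "tail_prob \<mu>"] assms(2) by (simp add: atLeast0LessThan)
  also have "\<dots> \<le> (\<Sum>s<Suc N. real s * pmf \<mu> s) + real (Suc N) * tail_prob \<mu> N
      - (\<Sum>s<Suc R. real s * pmf \<mu> s)"
    unfolding sum_tail_prob_lessThan using tail_prob_nonneg[of \<mu> N] tail_prob_nonneg[of \<mu> R]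
    by (simp add: algebra_simps)
  also have "\<dots> \<le> tail_mean \<mu> (Suc R)"
    using Suc_mult_tail_prob_le_tail_mean[OF assms(1), of N] by (simp add: tail_mean_eq[OF assms(1)])
  finally show ?thesis .
qed

section \<open>Uniform positivity of the renewal probabilities\<close>

lemma renewal_identity:
  assumes "pmf \<mu> 0 = 0"
  shows "(\<Sum>k\<le>n. renewal_prob \<mu> k * tail_prob \<mu> (n - k)) = 1"
proof (induction n)
  case 0
  show ?case
    using assms by (simp add: renewal_prob_0 tail_prob_0)
next
  case (Suc n)
  have conv: "(\<Sum>k\<le>n. renewal_prob \<mu> k * pmf \<mu> (Suc n - k)) = renewal_prob \<mu> (Suc n)"
    unfolding renewal_prob_Suc[OF assms]
    by (rule sum.reindex_bij_witness[where i="\<lambda>s. Suc n - s" and j="\<lambda>k. Suc n - k"]) auto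
  have "(\<Sum>k\<le>n. renewal_prob \<mu> k * tail_prob \<mu> (Suc n - k)) =
      (\<Sum>k\<le>n. renewal_prob \<mu> k * tail_prob \<mu> (n - k) - renewal_prob \<mu> k * pmf \<mu> (Suc n - k))"
  proof (intro sum.cong refl)
    fix k assume "k \<in> {..n}"
    then have "Suc n - k = Suc (n - k)"
      by auto
    then show "renewal_prob \<mu> k * tail_prob \<mu> (Suc n - k) =
        renewal_prob \<mu> k * tail_prob \<mu> (n - k) - renewal_prob \<mu> k * pmf \<mu> (Suc n - k)"
      using tail_prob_eq_Suc[of \<mu> "n - k"] by (simp add: algebra_simps)
  qed
  also have "\<dots> = 1 - renewal_prob \<mu> (Suc n)"
    using Suc conv by (simp add: sum_subtractf)
  finally show ?case
    using assms by (simp add: tail_prob_0)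
qed

lemma sum_recent_renewal_prob_ge:
  assumes "pmf \<mu> 0 = 0" "summable (\<lambda>s. real s * pmf \<mu> s)"
  shows "1 - tail_mean \<mu> (Suc R) \<le> (\<Sum>j\<in>{..n} \<inter> {..<R}. renewal_prob \<mu> (n - j))"
proof -
  have le_renewal: "renewal_prob \<mu> (n - j) * tail_prob \<mu> j \<le> renewal_prob \<mu> (n - j)"
    and le_tail: "renewal_prob \<mu> (n - j) * tail_prob \<mu> j \<le> tail_prob \<mu> j" for j
    by (simp_all add: mult_right_le_one_le mult_left_le_one_le
        renewal_prob_nonneg renewal_prob_le_1 tail_prob_nonneg tail_prob_le_1)
  have "1 = (\<Sum>j\<le>n. renewal_prob \<mu> (n - j) * tail_prob \<mu> j)"
    unfolding renewal_identity[OF assms(1), of n, symmetric]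
    by (rule sum.reindex_bij_witness[where i="\<lambda>k. n - k" and j="\<lambda>k. n - k"]) auto
  also have "{..n} = ({..n} \<inter> {..<R}) \<union> {R..<Suc n}"
    by auto
  also have "(\<Sum>j\<in>({..n} \<inter> {..<R}) \<union> {R..<Suc n}. renewal_prob \<mu> (n - j) * tail_prob \<mu> j) =
      (\<Sum>j\<in>{..n} \<inter> {..<R}. renewal_prob \<mu> (n - j) * tail_prob \<mu> j) +
      (\<Sum>j\<in>{R..<Suc n}. renewal_prob \<mu> (n - j) * tail_prob \<mu> j)"
    by (rule sum.union_disjoint) auto
  also have "\<dots> \<le> (\<Sum>j\<in>{..n} \<inter> {..<R}. renewal_prob \<mu> (n - j)) + (\<Sum>j\<in>{R..<Suc n}. tail_prob \<mu> j)"
    by (intro add_mono sum_mono le_renewal le_tail)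
  also have "(\<Sum>j\<in>{R..<Suc n}. tail_prob \<mu> j) \<le> tail_mean \<mu> (Suc R)"
  proof (cases "R \<le> Suc n")
    case False
    have "0 \<le> real (Suc R) * tail_prob \<mu> R"
      by (simp add: tail_prob_nonneg)
    then show ?thesis
      using False Suc_mult_tail_prob_le_tail_mean[OF assms(2), of R] by simp
  qed (rule sum_tail_prob_le_tail_mean[OF assms(2)])
  finally show ?thesis
    by simp
qed

lemma exists_recent_renewal_prob_ge:
  assumes "pmf \<mu> 0 = 0" "summable (\<lambda>s. real s * pmf \<mu> s)"
    and "0 < R" "tail_mean \<mu> (Suc R) \<le> 1/2"
  shows "\<exists>j<R. j \<le> n \<and> 1 / (2 * real R) \<le> renewal_prob \<mu> (n - j)"
proof (rule ccontr)
  assume "\<not> ?thesis"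
  then have "(\<Sum>j\<in>{..n} \<inter> {..<R}. renewal_prob \<mu> (n - j)) < (\<Sum>j\<in>{..n} \<inter> {..<R}. 1 / (2 * real R))"
    using assms(3) by (intro sum_strict_mono) auto
  also have "\<dots> \<le> 1/2"
    using card_mono[of "{..<R}" "{..n} \<inter> {..<R}"] assms(3) by (simp add: field_simps)
  finally show False
    using sum_recent_renewal_prob_ge[OF assms(1,2), of R n] assms(4) by simp
qed

lemma renewal_prob_uniformly_positive:
  assumes "pmf \<mu> 0 = 0" "0 < pmf \<mu> 1" "summable (\<lambda>s. real s * pmf \<mu> s)"
  shows "\<exists>c>0. \<forall>n. c \<le> renewal_prob \<mu> n"
proof -
  obtain N where N: "\<And>r. N \<le> r \<Longrightarrow> tail_mean \<mu> r < 1/2"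
    using order_tendstoD(2)[OF tail_mean_tendsto_0[OF assms(3)], of "1/2"]
    unfolding eventually_sequentially by auto
  define R where "R = Suc N"
  have "tail_mean \<mu> (Suc R) \<le> 1/2" "0 < R"
    using N[of "Suc R"] by (simp_all add: R_def)
  define c where "c = pmf \<mu> 1 ^ R / (2 * real R)"
  have "c \<le> renewal_prob \<mu> n" for n
  proof -
    obtain j where j: "j < R" "j \<le> n" "1 / (2 * real R) \<le> renewal_prob \<mu> (n - j)"
      using exists_recent_renewal_prob_ge[OF assms(1,3) \<open>0 < R\<close> \<open>tail_mean \<mu> (Suc R) \<le> 1/2\<close>] by blast
    have "c = pmf \<mu> 1 ^ R * (1 / (2 * real R))"
      by (simp add: c_def)
    also have "\<dots> \<le> pmf \<mu> 1 ^ j * renewal_prob \<mu> (n - j)"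
      using j assms(2) by (intro mult_mono power_decreasing) (auto simp: pmf_le_1)
    also have "\<dots> \<le> renewal_prob \<mu> n"
      using renewal_prob_add_ge[OF assms(1), of j "n - j"] j(2) by simp
    finally show ?thesis .
  qed
  moreover have "0 < c"
    using assms(2) \<open>0 < R\<close> by (simp add: c_def)
  ultimately show ?thesis
    by blast
qed

section \<open>Cluster sizes\<close>

lemma sum_lessThan_strict_mono:
  assumes "k < k'" "k' \<le> n" "\<And>j::nat. j < n \<Longrightarrow> (1::nat) \<le> S j"
  shows "(\<Sum>j<k. S j) < (\<Sum>j<k'. S j)"
proof -
  have "(\<Sum>j<k. S j) < (\<Sum>j<Suc k. S j)"
    using assms(3)[of k] assms(1,2) by simp
  also have "\<dots> \<le> (\<Sum>j<k'. S j)"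
    using assms by (intro sum_mono2) auto
  finally show ?thesis .
qed

lemma nclust_spec:
  assumes "\<And>j. j < n \<Longrightarrow> 1 \<le> S j" "hits n S"
  shows "nclust n S \<le> n" "(\<Sum>j<nclust n S. S j) = n"
proof -
  have "\<exists>!k. k \<le> n \<and> (\<Sum>j<k. S j) = n"
  proof (rule ex_ex1I)
    show "\<exists>k. k \<le> n \<and> (\<Sum>j<k. S j) = n"
      using assms(2) unfolding hits_def by blast
    show "k = k'" if "k \<le> n \<and> (\<Sum>j<k. S j) = n" "k' \<le> n \<and> (\<Sum>j<k'. S j) = n" for k k'
      using that sum_lessThan_strict_mono[of k k' n S] sum_lessThan_strict_mono[of k' k n S] assms(1)
      by (cases k k' rule: linorder_cases) auto
  qed
  then have "nclust n S \<le> n \<and> (\<Sum>j<nclust n S. S j) = n"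
    unfolding nclust_def by (rule theI')
  then show "nclust n S \<le> n" "(\<Sum>j<nclust n S. S j) = n"
    by simp_all
qed

lemma lab_bounds:
  assumes "p < (\<Sum>l<k. S l)"
  shows "p < (\<Sum>l<lab S p. S l)" "0 < lab S p \<Longrightarrow> (\<Sum>l<lab S p - 1. S l) \<le> p"
proof -
  show "p < (\<Sum>l<lab S p. S l)"
    unfolding lab_def using assms by (rule LeastI)
  show "(\<Sum>l<lab S p - 1. S l) \<le> p" if "0 < lab S p"
    using that not_less_Least[of "lab S p - 1" "\<lambda>j. p < (\<Sum>l<j. S l)"] by (simp add: lab_def)
qed

lemma card_block_le:
  assumes "\<And>j. j < n \<Longrightarrow> 1 \<le> S j" "hits n S" "\<sigma> permutes {..<n}" "1 \<le> j"
  shows "card {i \<in> {1..n}. lab S (\<sigma> (i - 1)) = j} \<le> S (j - 1)"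
proof -
  define block where "block = {i \<in> {1..n}. lab S (\<sigma> (i - 1)) = j}"
  have "inj_on (\<lambda>i. \<sigma> (i - 1)) block"
  proof (rule inj_onI)
    fix i i' assume "i \<in> block" "i' \<in> block" "\<sigma> (i - 1) = \<sigma> (i' - 1)"
    then show "i = i'"
      using injD[OF permutes_inj[OF assms(3)]] unfolding block_def by fastforce
  qed
  moreover have "(\<lambda>i. \<sigma> (i - 1)) ` block \<subseteq> {(\<Sum>l<j - 1. S l)..<(\<Sum>l<j. S l)}"
  proof
    fix p assume "p \<in> (\<lambda>i. \<sigma> (i - 1)) ` block"
    then obtain i where i: "i \<in> {1..n}" "lab S p = j" "p = \<sigma> (i - 1)"
      unfolding block_def by auto
    have "p < n"
      using i(1,3) permutes_in_image[OF assms(3), of "i - 1"] by auto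
    then have "p < (\<Sum>l<nclust n S. S l)"
      by (simp only: nclust_spec(2)[OF assms(1,2)])
    then show "p \<in> {(\<Sum>l<j - 1. S l)..<(\<Sum>l<j. S l)}"
      using lab_bounds[of p] i(2) assms(4) by auto
  qed
  ultimately have "card block \<le> card {(\<Sum>l<j - 1. S l)..<(\<Sum>l<j. S l)}"
    by (intro card_inj_on_le) auto
  also have "\<dots> = S (j - 1)"
    using assms(4) sum.lessThan_Suc[of S "j - 1"] by simp
  finally show ?thesis
    unfolding block_def .
qed

lemma largest_blocks_le_size:
  assumes "\<And>j. j < n \<Longrightarrow> 1 \<le> S j" "hits n S" "\<sigma> permutes {..<n}" "0 < n"
  shows "\<exists>j<n. largest (blocks n S \<sigma>) \<le> S j"
proof -
  have "nclust n S \<noteq> 0"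
    using nclust_spec(2)[OF assms(1,2)] assms(4) by (cases "nclust n S") auto
  then have "largest (blocks n S \<sigma>) \<in> card ` blocks n S \<sigma>"
    unfolding largest_def blocks_def by (intro Max_in) auto
  then obtain j where "j \<in> {1..nclust n S}"
      "largest (blocks n S \<sigma>) = card {i \<in> {1..n}. lab S (\<sigma> (i - 1)) = j}"
    unfolding blocks_def by auto
  moreover have "nclust n S \<le> n"
    using nclust_spec(1)[OF assms(1,2)] .
  ultimately show ?thesis
    using card_block_le[OF assms(1-3)] by (intro exI[of _ "j - 1"]) auto
qed

section \<open>The largest cluster\<close>

lemma prob_iid_sizes_some_in_le:
  "measure_pmf.prob (iid_sizes \<mu> n) {S. \<exists>j<n. S j \<in> A} \<le> real n * measure_pmf.prob \<mu> A"
proof -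
  have "{S. \<exists>j<n. S j \<in> A} = (\<Union>j<n. (\<lambda>S. S j) -` A)"
    by auto
  then have "measure_pmf.prob (iid_sizes \<mu> n) {S. \<exists>j<n. S j \<in> A} \<le>
      (\<Sum>j<n. measure_pmf.prob (iid_sizes \<mu> n) ((\<lambda>S. S j) -` A))"
    by (simp add: measure_pmf.finite_measure_subadditive_finite)
  also have "\<dots> = (\<Sum>j<n. measure_pmf.prob \<mu> A)"
    by (intro sum.cong refl) (metis lessThan_iff map_component_iid_sizes measure_map_pmf)
  finally show ?thesis
    by simp
qed

lemma ESC_eq_map_pair_pmf:
  "ESC n \<mu> = map_pmf (\<lambda>(S, \<sigma>). blocks n S \<sigma>)
     (pair_pmf (cond_pmf (iid_sizes \<mu> n) {S. hits n S}) (pmf_of_set {\<sigma>. \<sigma> permutes {..<n}}))"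
  unfolding ESC_def pair_pmf_def map_pmf_def by (simp add: bind_assoc_pmf bind_return_pmf)

lemma prob_ESC_largest_greater_le_cond:
  assumes "pmf \<mu> 0 = 0" "0 < renewal_prob \<mu> n" "0 < n"
  shows "measure_pmf.prob (ESC n \<mu>) {P. x < real (largest P)} \<le>
    measure_pmf.prob (cond_pmf (iid_sizes \<mu> n) {S. hits n S}) {S. \<exists>j<n. S j \<in> {s. x < real s}}"
proof -
  define Q where "Q = iid_sizes \<mu> n"
  define H where "H = {S. hits n S}"
  define SP where "SP = pair_pmf (cond_pmf Q H) (pmf_of_set {\<sigma>. \<sigma> permutes {..<n}})"
  define B where "B = {S. \<exists>j<n. S j \<in> {s. x < real s}}"
  have "{\<sigma>. \<sigma> permutes {..<n}} \<noteq> {}"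
    using permutes_id by blast
  moreover have "set_pmf Q \<inter> H \<noteq> {}"
    using assms(2) measure_Int_set_pmf[of Q H] by (auto simp: Int_commute Q_def H_def renewal_prob_def)
  ultimately have support: "set_pmf SP = (set_pmf Q \<inter> H) \<times> {\<sigma>. \<sigma> permutes {..<n}}"
    unfolding SP_def set_pair_pmf by (subst set_pmf_of_set) (auto simp: finite_permutations set_cond_pmf)
  have ae: "AE y in measure_pmf SP. y \<in> {(S, \<sigma>). x < real (largest (blocks n S \<sigma>))} \<longrightarrow> y \<in> fst -` B"
    unfolding AE_measure_pmf_iff support
  proof (intro ballI impI, clarsimp)
    fix S \<sigma> assume "S \<in> set_pmf Q" "S \<in> H" "\<sigma> permutes {..<n}"
      and greater: "x < real (largest (blocks n S \<sigma>))"
    then obtain j where "j < n" "largest (blocks n S \<sigma>) \<le> S j"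
      using largest_blocks_le_size[of n S \<sigma>] iid_sizes_pos[OF assms(1)] assms(3)
      by (auto simp: Q_def H_def)
    then show "S \<in> B"
      using greater unfolding B_def by auto
  qed
  have "measure_pmf.prob (ESC n \<mu>) {P. x < real (largest P)} =
      measure_pmf.prob SP {(S, \<sigma>). x < real (largest (blocks n S \<sigma>))}"
    by (simp add: ESC_eq_map_pair_pmf SP_def Q_def H_def vimage_def case_prod_unfold)
  also have "\<dots> \<le> measure_pmf.prob SP (fst -` B)"
    using ae by (intro measure_pmf.finite_measure_mono_AE) simp_all
  also have "\<dots> = measure_pmf.prob (cond_pmf Q H) B"
    by (simp add: SP_def map_fst_pair_pmf flip: measure_map_pmf)
  finally show ?thesis
    unfolding B_def Q_def H_def .
qed

lemma prob_ESC_largest_greater_le: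
  assumes "pmf \<mu> 0 = 0" "0 < renewal_prob \<mu> n" "0 < n"
  shows "measure_pmf.prob (ESC n \<mu>) {P. x < real (largest P)} \<le>
    real n * measure_pmf.prob \<mu> {s. x < real s} / renewal_prob \<mu> n"
proof -
  define Q where "Q = iid_sizes \<mu> n"
  define H where "H = {S. hits n S}"
  define B where "B = {S. \<exists>j<n. S j \<in> {s. x < real s}}"
  have QH: "measure_pmf.prob Q H = renewal_prob \<mu> n"
    by (simp add: Q_def H_def renewal_prob_def)
  have "measure_pmf.prob (ESC n \<mu>) {P. x < real (largest P)} \<le> measure_pmf.prob (cond_pmf Q H) B"
    unfolding Q_def H_def B_def by (rule prob_ESC_largest_greater_le_cond[OF assms])
  also have "\<dots> = measure_pmf.prob Q (H \<inter> B) / renewal_prob \<mu> n"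
    using measure_cond_pmf[of Q H B] assms(2) QH by simp
  also have "\<dots> \<le> measure_pmf.prob Q B / renewal_prob \<mu> n"
    using assms(2) by (intro divide_right_mono measure_pmf.finite_measure_mono) auto
  also have "\<dots> \<le> real n * measure_pmf.prob \<mu> {s. x < real s} / renewal_prob \<mu> n"
    using assms(2) prob_iid_sizes_some_in_le[of \<mu> n "{s. x < real s}"]
    unfolding B_def Q_def by (intro divide_right_mono) auto
  finally show ?thesis .
qed

lemma prob_ESC_largest_ratio_greater_le:
  assumes "pmf \<mu> 0 = 0" "summable (\<lambda>s. real s * pmf \<mu> s)"
    and "0 < \<epsilon>" "0 < c" "c \<le> renewal_prob \<mu> n" "0 < n"
  shows "measure_pmf.prob (ESC n \<mu>) {P. real (largest P) / real n > \<epsilon>} \<le>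
    tail_mean \<mu> (Suc (nat \<lfloor>\<epsilon> * real n\<rfloor>)) / (\<epsilon> * c)"
proof -
  have "{P. real (largest P) / real n > \<epsilon>} = {P. \<epsilon> * real n < real (largest P)}"
    using assms(6) by (auto simp: field_simps)
  then have "measure_pmf.prob (ESC n \<mu>) {P. real (largest P) / real n > \<epsilon>} \<le>
      real n * measure_pmf.prob \<mu> {s. \<epsilon> * real n < real s} / renewal_prob \<mu> n"
    using prob_ESC_largest_greater_le[OF assms(1) _ assms(6)] assms(4,5) by simp
  also have "\<dots> \<le> real n * measure_pmf.prob \<mu> {s. \<epsilon> * real n < real s} / c"
    using assms(4,5) by (intro divide_left_mono) auto
  also have "\<dots> = (\<epsilon> * real n) * measure_pmf.prob \<mu> {s. \<epsilon> * real n < real s} / (\<epsilon> * c)"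
    using assms(3) by simp
  also have "\<dots> \<le> tail_mean \<mu> (Suc (nat \<lfloor>\<epsilon> * real n\<rfloor>)) / (\<epsilon> * c)"
    using assms(2-4) by (intro divide_right_mono mult_prob_greater_le_tail_mean) auto
  finally show ?thesis .
qed

theorem theorem3:
  fixes \<mu> :: "nat pmf"
  assumes "pmf \<mu> 0 = 0"
    and "pmf \<mu> 1 > 0"
    and "summable (\<lambda>s. real s * pmf \<mu> s)"
  shows "\<forall>\<epsilon>>0. (\<lambda>n. measure_pmf.prob (ESC n \<mu>)
            {P. real (largest P) / real n > \<epsilon>}) \<longlonglongrightarrow> 0"
proof (intro allI impI)
  fix \<epsilon> :: real assume "\<epsilon> > 0"
  obtain c where "c > 0" and c: "\<And>n. c \<le> renewal_prob \<mu> n"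
    using renewal_prob_uniformly_positive[OF assms] by blast
  define bound where "bound n = tail_mean \<mu> (Suc (nat \<lfloor>\<epsilon> * real n\<rfloor>)) / (\<epsilon> * c)" for n
  have "eventually (\<lambda>n. measure_pmf.prob (ESC n \<mu>) {P. real (largest P) / real n > \<epsilon>} \<le> bound n)
      sequentially"
    using eventually_gt_at_top[of 0] unfolding bound_def
    by (rule eventually_mono) (rule prob_ESC_largest_ratio_greater_le[OF assms(1,3) \<open>\<epsilon> > 0\<close> \<open>c > 0\<close> c])
  moreover have "filterlim (\<lambda>n. Suc (nat \<lfloor>\<epsilon> * real n\<rfloor>)) sequentially sequentially"
    using filterlim_tendsto_pos_mult_at_top[OF tendsto_const \<open>\<epsilon> > 0\<close> filterlim_real_sequentially]
    by (intro filterlim_compose[OF filterlim_Suc] filterlim_compose[OF filterlim_nat_sequentially]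
        filterlim_compose[OF filterlim_floor_sequentially])
  then have "bound \<longlonglongrightarrow> 0"
    unfolding bound_def by (intro tendsto_divide_zero filterlim_compose[OF tail_mean_tendsto_0[OF assms(3)]])
  ultimately show "(\<lambda>n. measure_pmf.prob (ESC n \<mu>) {P. real (largest P) / real n > \<epsilon>}) \<longlonglongrightarrow> 0"
    using tendsto_sandwich[of "\<lambda>_. 0" _ sequentially bound 0] by simp
qed

end
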